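(* Let $(S,\alpha)$ be a twisted K3 surface, $d=\mathrm{ord}(\alpha)$, $B$ a B-field lift of $\alpha$, and $\lambda:(D_{\widetilde{NS}(S,B)},q)\cong(D_{T(S,B)},-q)$ the natural isometry. Then $(0,0,-\tfrac1d)\in\widetilde{NS}(S,B)^\vee$, and if $y\in T(S,B)^\vee$ represents $\lambda([(0,0,-\tfrac1d)])$, the map $e^B$ restricts to a Hodge isometry $$e^B:T(S)\xrightarrow{\ \sim\ }\langle T(S,B),\,y\rangle\subset T(S,B)^\vee .$$ Moreover, the surjection $\alpha:T(S)\to\mathbb Z/d\mathbb Z$ coincides with the composite $T(S)\xrightarrow{e^B}\langle T(S,B),y\rangle/T(S,B)=\langle [y]\rangle\cong\mathbb Z/d\mathbb Z$, where $[y]\mapsto \bar 1$.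
   Context: $S$ is a complex projective K3 surface with $NS(S)$, $T(S)=NS(S)^\perp\subset H^2(S,\mathbb Z)$ and holomorphic 2-form class $\omega_S$. Mukai lattice $\widetilde H(S,\mathbb Z)=H^0\oplus H^2\oplus H^4$, elements $(a,l,b)$, pairing $((a,l,b),(a',l',b'))=(l,l')-ab'-a'b$. For $B\in H^2(S,\mathbb Q)$, $e^B(a,l,b)=(a,l+aB,b+(B,l)+\frac a2(B,B))$. $\mathrm{Br}(S)\cong H^2(S,\mathbb Q)/(NS(S)_{\mathbb Q}+H^2(S,\mathbb Z))\cong \mathrm{Hom}(T(S),\mathbb Q/\mathbb Z)$, the second isomorphism sending the class of $B$ to $t\mapsto (B,t)\bmod\mathbb Z$; thus $\alpha$ of order $d$ is identified with a surjection $T(S)\to \frac1d\mathbb Z/\mathbb Z\cong\mathbb Z/d\mathbb Z$. A B-field lift of $\alpha$ is a preimage $B\in H^2(S,\mathbb Q)$. The twisted Mukai lattice $\widetilde H(S,B,\mathbb Z)$ is $\widetilde H(S,\mathbb Z)$ with Hodge structure of weight two with $(2,0)$-part $\mathbb C e^B(\omega_S)$; $\widetilde{NS}(S,B)=e^B(\omega_S)^\perp\cap\widetilde H(S,\mathbb Z)$ and $T(S,B)$ is its orthogonal complement in $\widetilde H(S,\mathbb Z)$, with induced Hodge structure; $T(S)$ has its Hodge structure from $H^2(S)$. For an even lattice $L$, $D_L=L^\vee/L$ with $q(x)=(x,x)\bmod 2\mathbb Z$. The natural isometry $\lambda$ sends $[x]$, $x\in\widetilde{NS}(S,B)^\vee$,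 to $[y]$ where $y\in T(S,B)^\vee$ satisfies $x+y\in\widetilde H(S,\mathbb Z)$. *)

theory Defs
  imports Complex_Main
begin

section \<open>The K3 lattice  U^3 + E8(-1)^2  on coordinates 0..21\<close>

definition E8_edge :: "nat \<Rightarrow> nat \<Rightarrow> bool" where
  "E8_edge i j \<longleftrightarrow> (i < 6 \<and> j = i + 1) \<or> (j < 6 \<and> i = j + 1)
     \<or> (i = 4 \<and> j = 7) \<or> (i = 7 \<and> j = 4)"

definition E8neg :: "nat \<Rightarrow> nat \<Rightarrow> int" where
  "E8neg i j = (if i = j then -2 else if E8_edge i j then 1 else 0)"

definition K3_gram :: "nat \<Rightarrow> nat \<Rightarrow> int" where
  "K3_gram i j =
     (if i < 6 \<and> j < 6 then (if i div 2 = j div 2 \<and> i \<noteq> j then 1 else 0)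
      else if 6 \<le> i \<and> i < 14 \<and> 6 \<le> j \<and> j < 14 then E8neg (i - 6) (j - 6)
      else if 14 \<le> i \<and> i < 22 \<and> 14 \<le> j \<and> j < 22 then E8neg (i - 14) (j - 14)
      else 0)"

definition H2 :: "(nat \<Rightarrow> 'a::zero) set" where
  "H2 = {x. \<forall>i\<ge>22. x i = 0}"

text \<open>Bilinear (not hermitian) extension of the intersection form.\<close>
definition h2pair :: "(nat \<Rightarrow> 'a::comm_ring_1) \<Rightarrow> (nat \<Rightarrow> 'a) \<Rightarrow> 'a" where
  "h2pair x y = (\<Sum>i<22. \<Sum>j<22. of_int (K3_gram i j) * x i * y j)"

definition H2Z :: "(nat \<Rightarrow> rat) set" where
  "H2Z = {x \<in> H2. \<forall>i. x i \<in> \<int>}"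

definition cplx :: "(nat \<Rightarrow> rat) \<Rightarrow> (nat \<Rightarrow> complex)" where
  "cplx x = (\<lambda>i. of_rat (x i))"

definition is_period :: "(nat \<Rightarrow> complex) \<Rightarrow> bool" where
  "is_period \<omega> \<longleftrightarrow> \<omega> \<in> H2 \<and> h2pair \<omega> \<omega> = 0
      \<and> Re (h2pair \<omega> (\<lambda>i. cnj (\<omega> i))) > 0"

definition NS :: "(nat \<Rightarrow> complex) \<Rightarrow> (nat \<Rightarrow> rat) set" where
  "NS \<omega> = {l \<in> H2Z. h2pair (cplx l) \<omega> = 0}"

definition TS :: "(nat \<Rightarrow> complex) \<Rightarrow> (nat \<Rightarrow> rat) set" where
  "TS \<omega> = {t \<in> H2Z. \<forall>l \<in> NS \<omega>. h2pair t l = 0}"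

text \<open>Projective K3 surface, described by its period (Torelli + surjectivity of the period map).\<close>
definition projective_K3_period :: "(nat \<Rightarrow> complex) \<Rightarrow> bool" where
  "projective_K3_period \<omega> \<longleftrightarrow> is_period \<omega> \<and> (\<exists>l \<in> NS \<omega>. h2pair l l > 0)"

text \<open>Order of the Brauer class of B, i.e. of the homomorphism t |-> (B,t) mod Z on T(S).\<close>
definition br_order :: "(nat \<Rightarrow> complex) \<Rightarrow> (nat \<Rightarrow> rat) \<Rightarrow> nat" where
  "br_order \<omega> B = (LEAST d::nat. d > 0 \<and> (\<forall>t \<in> TS \<omega>. of_nat d * h2pair B t \<in> \<int>))"

type_synonym 'a mukai = "'a \<times> (nat \<Rightarrow> 'a) \<times> 'a"

definition mpair :: "'a::comm_ring_1 mukai \<Rightarrow> 'a mukai \<Rightarrow> 'a" where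
  "mpair v w = (case v of (a, l, b) \<Rightarrow> case w of (a', l', b') \<Rightarrow>
      h2pair l l' - a * b' - a' * b)"

definition eB :: "(nat \<Rightarrow> 'a::field) \<Rightarrow> 'a mukai \<Rightarrow> 'a mukai" where
  "eB B v = (case v of (a, l, b) \<Rightarrow>
      (a, (\<lambda>i. l i + a * B i), b + h2pair B l + a / 2 * h2pair B B))"

definition madd :: "'a::plus mukai \<Rightarrow> 'a mukai \<Rightarrow> 'a mukai" where
  "madd v w = (case v of (a, l, b) \<Rightarrow> case w of (a', l', b') \<Rightarrow>
      (a + a', (\<lambda>i. l i + l' i), b + b'))"

definition msc :: "'a::times \<Rightarrow> 'a mukai \<Rightarrow> 'a mukai" where
  "msc c v = (case v of (a, l, b) \<Rightarrow> (c * a, (\<lambda>i. c * l i), c * b))"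

definition mcplx :: "rat mukai \<Rightarrow> complex mukai" where
  "mcplx v = (case v of (a, l, b) \<Rightarrow> (of_rat a, cplx l, of_rat b))"

definition MZ :: "rat mukai set" where
  "MZ = {(a, l, b). a \<in> \<int> \<and> l \<in> H2Z \<and> b \<in> \<int>}"

definition qspan :: "rat mukai set \<Rightarrow> rat mukai set" where
  "qspan L = {(\<Sum>v\<in>F. c v * fst v, (\<lambda>i. \<Sum>v\<in>F. c v * fst (snd v) i),
               \<Sum>v\<in>F. c v * snd (snd v)) | F c. finite F \<and> F \<subseteq> L}"

definition mdual :: "rat mukai set \<Rightarrow> rat mukai set" where
  "mdual L = {x \<in> qspan L. \<forall>v \<in> L. mpair x v \<in> \<int>}"

definition NSt :: "(nat \<Rightarrow> complex) \<Rightarrow> (nat \<Rightarrow> rat) \<Rightarrow> rat mukai set" where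
  "NSt \<omega> B = {v \<in> MZ. mpair (mcplx v) (eB (cplx B) (0, \<omega>, 0)) = 0}"

definition TSB :: "(nat \<Rightarrow> complex) \<Rightarrow> (nat \<Rightarrow> rat) \<Rightarrow> rat mukai set" where
  "TSB \<omega> B = {v \<in> MZ. \<forall>w \<in> NSt \<omega> B. mpair v w = 0}"

definition gen_by :: "rat mukai set \<Rightarrow> rat mukai \<Rightarrow> rat mukai set" where
  "gen_by L y = {madd s (msc (of_int k) y) | s k. s \<in> L}"

end

theory Submission imports Defs begin

(* Everything is explicit once the lattices are described concretely.
   (1) The intersection form is a symmetric bilinear form compatible with Q -> C, and every
       rational class has a common denominator; hence a rational class orthogonal to the
       period is orthogonal to T(S).
   (2) The order d of alpha divides every integer a with a(B,-)|T(S) integral.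
   (3) The H^0-component a of a twisted algebraic class (a,l,b) satisfies a(B,t) = (t,l) for
       t in T(S), so d | a; therefore (0,0,-1/d) pairs integrally with NS~(S,B).
   (4) T(S,B) = { e^B(0,l,0) : l in T(S), (B,l) in Z }, tested against the algebraic
       classes (0,0,1), (0,n,0) and (N, NB, 0).
   (5) A representative y of lambda([(0,0,-1/d)]) is e^B(0,m,0) with m in T(S) and
       (B,m) = 1/d mod Z.
   From (4) and (5) the map t |-> e^B(0,t,0) is a bijection onto T(S,B) + Z y, an isometry
   compatible with the Hodge structures, y has order d modulo T(S,B), and the coefficient of
   y in e^B(0,t,0) is d(B,t) = alpha(t) mod d. *)

lemma K3_gram_sym: "K3_gram i j = K3_gram j i"
  unfolding K3_gram_def E8neg_def E8_edge_def by auto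

lemma h2pair_sym: "h2pair x y = h2pair y x"
  unfolding h2pair_def
  by (subst sum.swap) (simp add: K3_gram_sym mult_ac)

lemma h2pair_lin_left:
  "h2pair (\<lambda>i. a * x i + b * y i) z = a * h2pair x z + b * h2pair y z"
  unfolding h2pair_def by (simp add: sum_distrib_left sum.distrib algebra_simps)

lemma h2pair_lin_right:
  "h2pair z (\<lambda>i. a * x i + b * y i) = a * h2pair z x + b * h2pair z y"
  using h2pair_lin_left[of a x b y z] by (simp add: h2pair_sym)

lemma h2pair_scale_left: "h2pair (\<lambda>i. a * x i) z = a * h2pair x z"
  using h2pair_lin_left[of a x 0 x z] by simp

lemma h2pair_scale_right: "h2pair z (\<lambda>i. a * x i) = a * h2pair z x"
  using h2pair_lin_right[of z a x 0 x] by simp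

lemma h2pair_addscale_left: "h2pair (\<lambda>i. x i + c * y i) z = h2pair x z + c * h2pair y z"
  using h2pair_lin_left[of 1 x c y z] by simp

lemma h2pair_addscale_right: "h2pair z (\<lambda>i. x i + c * y i) = h2pair z x + c * h2pair z y"
  using h2pair_lin_right[of z 1 x c y] by simp

lemma h2pair_diff_left: "h2pair (\<lambda>i. x i - a * y i) z = h2pair x z - a * h2pair y z"
  using h2pair_lin_left[of 1 x "-a" y z] by simp

lemma h2pair_zero_left: "h2pair (\<lambda>i. 0) z = 0"
  unfolding h2pair_def by simp

lemma h2pair_zero_right: "h2pair z (\<lambda>i. 0) = 0"
  using h2pair_zero_left h2pair_sym by metis

lemma h2pair_sum_left: "h2pair (\<lambda>i. \<Sum>v\<in>F. g v i) z = (\<Sum>v\<in>F. h2pair (g v) z)"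
  unfolding h2pair_def
  by (simp add: sum_distrib_left sum_distrib_right mult_ac sum.swap[of _ F])

lemma h2pair_sum_right: "h2pair z (\<lambda>i. \<Sum>v\<in>F. g v i) = (\<Sum>v\<in>F. h2pair z (g v))"
  using h2pair_sum_left[of g F z] by (simp add: h2pair_sym)

lemma h2pair_cplx: "h2pair (cplx x) (cplx y) = of_rat (h2pair x y)"
  unfolding h2pair_def cplx_def by (simp add: of_rat_sum of_rat_mult)

lemma Ints_diff_iff:
  fixes a b :: "'a::ring_1"
  assumes "a - b \<in> \<int>"
  shows "a \<in> \<int> \<longleftrightarrow> b \<in> \<int>"
  using assms Ints_add[of "a - b" b] Ints_diff[of a "a - b"] by auto

lemma H2Z_pair_int: "x \<in> H2Z \<Longrightarrow> y \<in> H2Z \<Longrightarrow> h2pair x y \<in> \<int>"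
  unfolding h2pair_def H2Z_def by (intro Ints_sum Ints_mult) auto

lemma H2Z_addscale: "x \<in> H2Z \<Longrightarrow> y \<in> H2Z \<Longrightarrow> (\<lambda>i. x i + of_int k * y i) \<in> H2Z"
  unfolding H2Z_def H2_def by (auto intro!: Ints_add Ints_mult)

lemma H2Z_scale: "y \<in> H2Z \<Longrightarrow> (\<lambda>i. of_int k * y i) \<in> H2Z"
  unfolding H2Z_def H2_def by (auto intro!: Ints_mult)

text \<open>Finitely many rationals become integral after multiplication by one positive integer
  (the product of their denominators).\<close>
lemma common_denominator:
  assumes "finite I"
  shows "\<exists>n::int. n > 0 \<and> (\<forall>i\<in>I. of_int n * (x i :: rat) \<in> \<int>)"
proof -
  define den where "den i = snd (quotient_of (x i))" for i
  have den_int: "of_int (den i) * x i \<in> \<int>" for i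
  proof -
    obtain p q where pq: "quotient_of (x i) = (p, q)" by (cases "quotient_of (x i)")
    then have "of_int q * x i = of_int p"
      using quotient_of_div[OF pq] quotient_of_denom_pos[OF pq] by simp
    then show ?thesis unfolding den_def pq by simp
  qed
  have "of_int (prod den I) * x i \<in> \<int>" if "i \<in> I" for i
  proof -
    have "of_int (prod den I) * x i = of_int (prod den (I - {i})) * (of_int (den i) * x i)"
      using prod.remove[OF assms that, of den] by simp
    then show ?thesis using den_int by (metis Ints_mult Ints_of_int)
  qed
  moreover have "prod den I > 0"
    unfolding den_def by (intro prod_pos) (simp add: quotient_of_denom_pos')
  ultimately show ?thesis by blast
qed

lemma H2_common_denominator:
  assumes "x \<in> H2"
  shows "\<exists>n::int. n > 0 \<and> (\<lambda>i. of_int n * x i) \<in> H2Z"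
proof -
  obtain n where n: "n > 0" "\<forall>i<22. of_int n * x i \<in> \<int>"
    using common_denominator[of "{..<22::nat}" x] by auto
  have "of_int n * x i \<in> \<int>" for i
    using n assms by (cases "i < 22") (auto simp: H2_def)
  with n assms show ?thesis unfolding H2Z_def H2_def by auto
qed

text \<open>A rational class orthogonal to the period is orthogonal to T(S): some integral
  multiple of it lies in NS(S).\<close>
lemma TS_orth_rational:
  assumes r: "r \<in> H2" and h: "h2pair (cplx r) \<omega> = 0" and t: "t \<in> TS \<omega>"
  shows "h2pair t r = 0"
proof -
  obtain n::int where n: "n > 0" and nr: "(\<lambda>i. of_int n * r i) \<in> H2Z"
    using H2_common_denominator[OF r] by blast
  have "cplx (\<lambda>i. of_int n * r i) = (\<lambda>i. of_int n * cplx r i)"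
    unfolding cplx_def by (simp add: of_rat_mult)
  then have "(\<lambda>i. of_int n * r i) \<in> NS \<omega>"
    using nr h unfolding NS_def by (simp add: h2pair_scale_left)
  then have "of_int n * h2pair t r = 0"
    using t unfolding TS_def by (auto simp: h2pair_scale_right)
  then show ?thesis using n by simp
qed

lemma TS_addscale: "t \<in> TS \<omega> \<Longrightarrow> u \<in> TS \<omega> \<Longrightarrow> (\<lambda>i. t i + of_int k * u i) \<in> TS \<omega>"
  unfolding TS_def by (auto intro!: H2Z_addscale simp: h2pair_addscale_left)

lemma TS_scale: "u \<in> TS \<omega> \<Longrightarrow> (\<lambda>i. of_int k * u i) \<in> TS \<omega>"
  unfolding TS_def by (auto intro!: H2Z_scale simp: h2pair_scale_left)

lemma br_order_exists:
  assumes "B \<in> H2"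
  shows "\<exists>d::nat. d > 0 \<and> (\<forall>t \<in> TS \<omega>. of_nat d * h2pair B t \<in> \<int>)"
proof -
  obtain n::int where n: "n > 0" and nB: "(\<lambda>i. of_int n * B i) \<in> H2Z"
    using H2_common_denominator[OF assms] by blast
  have "of_nat (nat n) * h2pair B t \<in> \<int>" if "t \<in> TS \<omega>" for t
    using H2Z_pair_int[OF nB, of t] that n unfolding TS_def by (simp add: h2pair_scale_left)
  with n show ?thesis by (intro exI[of _ "nat n"]) auto
qed

lemma br_order_props:
  assumes "B \<in> H2"
  shows "br_order \<omega> B > 0" "\<forall>t \<in> TS \<omega>. of_nat (br_order \<omega> B) * h2pair B t \<in> \<int>"
  using LeastI_ex[OF br_order_exists[OF assms, of \<omega>]] unfolding br_order_def by auto

text \<open>The order d divides every integer a for which a(B,-) is integral on T(S): otherwise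
  a mod d would be a smaller positive such integer.\<close>
lemma br_order_dvd:
  assumes B: "B \<in> H2" and a: "\<forall>t \<in> TS \<omega>. of_int a * h2pair B t \<in> \<int>"
  shows "int (br_order \<omega> B) dvd a"
proof (rule ccontr)
  define d where "d = br_order \<omega> B"
  define r where "r = a mod int d"
  assume "\<not> int (br_order \<omega> B) dvd a"
  then have r: "0 < r" "r < int d"
    using br_order_props(1)[OF B, of \<omega>] unfolding r_def d_def
    by (auto simp: dvd_eq_mod_eq_0 order_le_neq_trans)
  have "of_nat (nat r) * h2pair B t \<in> \<int>" if t: "t \<in> TS \<omega>" for t
  proof -
    have r_eq: "(of_int r :: rat) = of_int a - of_int (a div int d) * of_nat d"
      unfolding r_def by (simp add: minus_div_mult_eq_mod[symmetric])
    have "of_int r * h2pair B t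
        = of_int a * h2pair B t - of_int (a div int d) * (of_nat d * h2pair B t)"
      unfolding r_eq by (simp add: algebra_simps)
    also have "\<dots> \<in> \<int>"
      using a t br_order_props(2)[OF B] unfolding d_def by (metis Ints_diff Ints_mult Ints_of_int)
    finally show ?thesis using r by simp
  qed
  then have "d \<le> nat r" unfolding d_def br_order_def using r by (intro Least_le) auto
  then show False using r by simp
qed

lemma eB_0: "eB B (0, t, 0) = (0, t, h2pair B t)"
  unfolding eB_def by simp

lemma NSt_iff:
  "(a, l, b) \<in> NSt \<omega> B \<longleftrightarrow> (a, l, b) \<in> MZ \<and> h2pair (cplx (\<lambda>i. l i - a * B i)) \<omega> = 0"
proof -
  have "cplx (\<lambda>i. l i - a * B i) = (\<lambda>i. cplx l i - of_rat a * cplx B i)"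
    unfolding cplx_def by (simp add: of_rat_diff of_rat_mult)
  then show ?thesis
    unfolding NSt_def mpair_def mcplx_def eB_def by (simp add: h2pair_diff_left cplx_def)
qed

lemma NSt_point: "(0, (\<lambda>_. 0), 1) \<in> NSt \<omega> B"
  unfolding NSt_iff MZ_def H2Z_def H2_def cplx_def by (simp add: h2pair_zero_left)

lemma NSt_NS: "n \<in> NS \<omega> \<Longrightarrow> (0, n, 0) \<in> NSt \<omega> B"
  unfolding NSt_iff NS_def MZ_def by (simp add: cplx_def)

lemma NSt_multiple_B:
  assumes "B \<in> H2" and "(\<lambda>i. of_int N * B i) \<in> H2Z"
  shows "(of_int N, (\<lambda>i. of_int N * B i), 0) \<in> NSt \<omega> B"
  using assms unfolding NSt_iff MZ_def by (simp add: cplx_def h2pair_zero_left)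

text \<open>For an algebraic class (a,l,b) and t in T(S) one has a(B,t) = (t,l); hence d | a.\<close>
lemma NSt_rank_divisible:
  assumes B: "B \<in> H2" and v: "(of_int a, l, b) \<in> NSt \<omega> B"
  shows "int (br_order \<omega> B) dvd a"
proof (rule br_order_dvd[OF B], intro ballI)
  fix t assume t: "t \<in> TS \<omega>"
  have h: "h2pair (cplx (\<lambda>i. l i - of_int a * B i)) \<omega> = 0" and lZ: "l \<in> H2Z"
    using v unfolding NSt_iff MZ_def by auto
  have "(\<lambda>i. l i - of_int a * B i) \<in> H2" using lZ B unfolding H2Z_def H2_def by auto
  from TS_orth_rational[OF this h t] have "of_int a * h2pair B t = h2pair t l"
    by (simp add: h2pair_diff_left h2pair_sym[of t])
  moreover have "h2pair t l \<in> \<int>" using t lZ H2Z_pair_int unfolding TS_def by auto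
  ultimately show "of_int a * h2pair B t \<in> \<int>" by simp
qed

lemma NSt_dual_point:
  assumes B: "B \<in> H2"
  shows "(0, (\<lambda>_. 0), - 1 / of_nat (br_order \<omega> B)) \<in> mdual (NSt \<omega> B)"
  unfolding mdual_def
proof (intro CollectI conjI ballI)
  show "(0, (\<lambda>_. 0), - 1 / of_nat (br_order \<omega> B)) \<in> qspan (NSt \<omega> B)"
    unfolding qspan_def using NSt_point
    by (intro CollectI exI[of _ "{(0, (\<lambda>_. 0), 1)}"]
          exI[of _ "\<lambda>_. - 1 / of_nat (br_order \<omega> B)"]) auto
next
  fix v assume v: "v \<in> NSt \<omega> B"
  then obtain a l b where vv: "v = (of_int a, l, b)"
    unfolding NSt_def MZ_def by (auto elim: Ints_cases)
  have "int (br_order \<omega> B) dvd a" using NSt_rank_divisible[OF B] v vv by simp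
  then have "(of_int a / of_nat (br_order \<omega> B) :: rat) \<in> \<int>"
    using of_int_div_of_int_in_Ints_iff[of a "int (br_order \<omega> B)"] by simp
  then show "mpair (0, (\<lambda>_. 0), - 1 / of_nat (br_order \<omega> B)) v \<in> \<int>"
    unfolding vv mpair_def by (simp add: h2pair_zero_left)
qed

text \<open>Every class of T(S,B) is e^B(0,l,0) with l in T(S): orthogonality to (0,0,1) kills the
  H^0-part, to (0,n,0) puts l in T(S), and to (N, NB, 0) forces the H^4-part to be (B,l).\<close>
lemma TSB_form:
  assumes B: "B \<in> H2" and v: "v \<in> TSB \<omega> B"
  shows "\<exists>l \<in> TS \<omega>. v = eB B (0, l, 0)"
proof -
  obtain a l b where vv: "v = (a, l, b)" by (cases v)
  have lZ: "l \<in> H2Z" using v vv unfolding TSB_def MZ_def by auto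
  have orth: "\<And>w. w \<in> NSt \<omega> B \<Longrightarrow> mpair (a, l, b) w = 0"
    using v vv unfolding TSB_def by auto
  have a0: "a = 0" using orth[OF NSt_point] by (simp add: mpair_def h2pair_zero_right)
  have lTS: "l \<in> TS \<omega>"
    using lZ orth[OF NSt_NS] unfolding TS_def by (simp add: mpair_def)
  obtain N::int where N: "N > 0" and NB: "(\<lambda>i. of_int N * B i) \<in> H2Z"
    using H2_common_denominator[OF B] by blast
  have "h2pair l (\<lambda>i. of_int N * B i) - of_int N * b = 0"
    using orth[OF NSt_multiple_B[OF B NB]] by (simp add: mpair_def)
  then have "of_int N * (h2pair l B - b) = 0"
    by (simp only: h2pair_scale_right) (simp add: algebra_simps)
  then have "b = h2pair B l" using N by (simp add: h2pair_sym)
  then show ?thesis using vv a0 lTS unfolding eB_0 by auto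
qed

lemma TSB_eB_iff:
  assumes B: "B \<in> H2"
  shows "eB B (0, l, 0) \<in> TSB \<omega> B \<longleftrightarrow> l \<in> TS \<omega> \<and> h2pair B l \<in> \<int>"
proof
  assume "eB B (0, l, 0) \<in> TSB \<omega> B"
  with TSB_form[OF B this] show "l \<in> TS \<omega> \<and> h2pair B l \<in> \<int>"
    unfolding eB_0 TSB_def MZ_def by auto
next
  assume l: "l \<in> TS \<omega> \<and> h2pair B l \<in> \<int>"
  have "mpair (0, l, h2pair B l) w = 0" if w: "w \<in> NSt \<omega> B" for w
  proof -
    obtain a' l' b' where ww: "w = (a', l', b')" by (cases w)
    have h: "h2pair (cplx (\<lambda>i. l' i - a' * B i)) \<omega> = 0" and l'Z: "l' \<in> H2Z"
      using w unfolding ww NSt_iff MZ_def by auto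
    have "(\<lambda>i. l' i - a' * B i) \<in> H2" using l'Z B unfolding H2Z_def H2_def by auto
    from TS_orth_rational[OF this h conjunct1[OF l]] have "h2pair l l' - a' * h2pair l B = 0"
      by (simp add: h2pair_diff_left h2pair_sym[of l])
    then show ?thesis unfolding ww mpair_def by (simp add: h2pair_sym)
  qed
  moreover have "(0, l, h2pair B l) \<in> MZ" using l unfolding MZ_def TS_def by auto
  ultimately show "eB B (0, l, 0) \<in> TSB \<omega> B" unfolding eB_0 TSB_def by auto
qed

lemma eB_comb:
  "madd (eB B (0, l, 0)) (msc c (eB B (0, m, 0))) = eB B (0, (\<lambda>i. l i + c * m i), 0)"
  unfolding eB_0 madd_def msc_def by (simp add: h2pair_addscale_right)

lemma eB_scale: "msc c (eB B (0, m, 0)) = eB B (0, (\<lambda>i. c * m i), 0)"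
  unfolding eB_0 msc_def by (simp add: h2pair_scale_right)

lemma qspan_TSB:
  assumes B: "B \<in> H2" and x: "x \<in> qspan (TSB \<omega> B)"
  shows "\<exists>m. x = eB B (0, m, 0) \<and> (\<forall>n \<in> NS \<omega>. h2pair m n = 0)"
proof -
  obtain F c where F: "finite F" "F \<subseteq> TSB \<omega> B" and
    xF: "x = (\<Sum>v\<in>F. c v * fst v, (\<lambda>i. \<Sum>v\<in>F. c v * fst (snd v) i), \<Sum>v\<in>F. c v * snd (snd v))"
    using x unfolding qspan_def by blast
  define m where "m = (\<lambda>i. \<Sum>v\<in>F. c v * fst (snd v) i)"
  have Fv: "fst v = 0 \<and> snd (snd v) = h2pair B (fst (snd v)) \<and> fst (snd v) \<in> TS \<omega>"
    if "v \<in> F" for v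
    using TSB_form[OF B] F(2) that unfolding eB_0 by fastforce
  have "(\<Sum>v\<in>F. c v * snd (snd v)) = (\<Sum>v\<in>F. h2pair B (\<lambda>i. c v * fst (snd v) i))"
    using Fv by (intro sum.cong refl) (simp add: h2pair_scale_right)
  also have "\<dots> = h2pair B m" unfolding m_def by (simp add: h2pair_sum_right)
  finally have "x = eB B (0, m, 0)" using xF Fv unfolding m_def eB_0 by simp
  moreover have "h2pair m n = 0" if "n \<in> NS \<omega>" for n
    using Fv that unfolding m_def TS_def
    by (simp add: h2pair_sum_left h2pair_scale_left)
  ultimately show ?thesis by blast
qed

lemma dual_TSB_representative:
  assumes B: "B \<in> H2" and y: "y \<in> mdual (TSB \<omega> B)"
    and yZ: "madd (0, (\<lambda>_. 0), - c) y \<in> MZ"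
  shows "\<exists>m \<in> TS \<omega>. y = eB B (0, m, 0) \<and> h2pair B m - c \<in> \<int>"
proof -
  obtain m where m: "y = eB B (0, m, 0)" and orth: "\<forall>n \<in> NS \<omega>. h2pair m n = 0"
    using qspan_TSB[OF B] y unfolding mdual_def by blast
  have "m \<in> H2Z" and "- c + h2pair B m \<in> \<int>"
    using yZ unfolding m eB_0 madd_def MZ_def by auto
  with orth m show ?thesis unfolding TS_def by auto
qed

lemma eB_isometry: "mpair (eB B (0, t, 0)) (eB B (0, t', 0)) = h2pair t t'"
  unfolding eB_0 mpair_def by simp

lemma eB_cplx: "mcplx (eB B (0, t, 0)) = eB (cplx B) (0, cplx t, 0)"
  unfolding eB_0 mcplx_def by (simp add: h2pair_cplx)

text \<open>For the rest of the argument fix y = e^B(0,m,0) with m in T(S) and (B,m) = 1/d mod Z,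
  as produced by the previous section.\<close>
context
  fixes \<omega> B m and d :: nat
  assumes B: "B \<in> H2" and m: "m \<in> TS \<omega>" and hm: "h2pair B m - 1 / of_nat d \<in> \<int>"
begin

lemma gen_by_coefficient:
  assumes t: "t \<in> TS \<omega>" and s: "s \<in> TSB \<omega> B"
    and eq: "eB B (0, t, 0) = madd s (msc (of_int k) (eB B (0, m, 0)))"
  shows "h2pair B t - of_int k / of_nat d \<in> \<int>"
proof -
  obtain l where l: "l \<in> TS \<omega>" "s = eB B (0, l, 0)" using TSB_form[OF B s] by blast
  have lZ: "h2pair B l \<in> \<int>" using TSB_eB_iff[OF B] s l by simp
  have "eB B (0, t, 0) = eB B (0, (\<lambda>i. l i + of_int k * m i), 0)"
    using eq unfolding l eB_comb .
  then have "t = (\<lambda>i. l i + of_int k * m i)" by (simp add: eB_0)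
  then have "h2pair B t - of_int k / of_nat d
      = h2pair B l + of_int k * (h2pair B m - 1 / of_nat d)"
    by (simp add: h2pair_addscale_right field_simps)
  also have "\<dots> \<in> \<int>" using lZ hm by (intro Ints_add Ints_mult) auto
  finally show ?thesis .
qed

lemma gen_by_order:
  assumes d: "d > 0"
  shows "msc (of_int k) (eB B (0, m, 0)) \<in> TSB \<omega> B \<longleftrightarrow> int d dvd k"
proof -
  have shift: "of_int k * h2pair B m - of_int k / of_nat d \<in> \<int>"
    using hm Ints_mult[OF Ints_of_int[of k] hm] by (simp add: algebra_simps)
  have "msc (of_int k) (eB B (0, m, 0)) \<in> TSB \<omega> B \<longleftrightarrow> of_int k * h2pair B m \<in> \<int>"
    unfolding eB_scale TSB_eB_iff[OF B] using TS_scale[OF m] by (simp add: h2pair_scale_right)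
  also have "\<dots> \<longleftrightarrow> (of_int k / of_int (int d) :: rat) \<in> \<int>"
    using Ints_diff_iff[OF shift] by simp
  also have "\<dots> \<longleftrightarrow> int d dvd k" using d of_int_div_of_int_in_Ints_iff[of k "int d"] by simp
  finally show ?thesis .
qed

text \<open>e^B maps T(S) bijectively onto T(S,B) + Z y: e^B(0,t,0) = e^B(0, t - jm, 0) + j y with
  j = d(B,t), and the first summand is in T(S,B) since (B, t - jm) = -j((B,m) - 1/d).\<close>
lemma eB_bij_gen_by:
  assumes dI: "\<forall>t \<in> TS \<omega>. of_nat d * h2pair B t \<in> \<int>" and d: "d > 0"
  shows "bij_betw (\<lambda>t. eB B (0, t, 0)) (TS \<omega>) (gen_by (TSB \<omega> B) (eB B (0, m, 0)))"
proof (rule bij_betw_imageI)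
  show "inj_on (\<lambda>t. eB B (0, t, 0)) (TS \<omega>)" by (rule inj_onI) (simp add: eB_0)
  have image_sub: "eB B (0, t, 0) \<in> gen_by (TSB \<omega> B) (eB B (0, m, 0))" if t: "t \<in> TS \<omega>" for t
  proof -
    obtain j where j: "of_nat d * h2pair B t = of_int j" using dI t by (auto elim: Ints_cases)
    define l where "l = (\<lambda>i. t i + of_int (- j) * m i)"
    have "h2pair B l = - of_int j * (h2pair B m - 1 / of_nat d)"
      unfolding l_def h2pair_addscale_right using j d by (simp add: field_simps)
    also have "\<dots> \<in> \<int>" using hm by (intro Ints_mult) auto
    finally have "eB B (0, l, 0) \<in> TSB \<omega> B"
      using TSB_eB_iff[OF B] TS_addscale[OF t m, of "- j"] unfolding l_def by simp
    moreover have "eB B (0, t, 0) = madd (eB B (0, l, 0)) (msc (of_int j) (eB B (0, m, 0)))"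
      unfolding eB_comb l_def by simp
    ultimately show ?thesis unfolding gen_by_def by blast
  qed
  have sub_image: "x \<in> (\<lambda>t. eB B (0, t, 0)) ` TS \<omega>"
    if x: "x \<in> gen_by (TSB \<omega> B) (eB B (0, m, 0))" for x
  proof -
    obtain s k where s: "s \<in> TSB \<omega> B" and xs: "x = madd s (msc (of_int k) (eB B (0, m, 0)))"
      using x unfolding gen_by_def by blast
    obtain l where l: "l \<in> TS \<omega>" "s = eB B (0, l, 0)" using TSB_form[OF B s] by blast
    have "x = eB B (0, (\<lambda>i. l i + of_int k * m i), 0)" unfolding xs l eB_comb ..
    then show ?thesis using TS_addscale[OF l(1) m] by blast
  qed
  show "(\<lambda>t. eB B (0, t, 0)) ` TS \<omega> = gen_by (TSB \<omega> B) (eB B (0, m, 0))"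
    using image_sub sub_image by blast
qed

end

theorem lemma2p2:
  fixes \<omega> :: "nat \<Rightarrow> complex" and B :: "nat \<Rightarrow> rat" and d :: nat
    and y :: "rat mukai"
  assumes S: "projective_K3_period \<omega>"
    and B: "B \<in> H2"
    and d: "d = br_order \<omega> B"
  shows "(0, (\<lambda>_. 0), - 1 / of_nat d) \<in> mdual (NSt \<omega> B)
    \<and> (y \<in> mdual (TSB \<omega> B) \<and> madd (0, (\<lambda>_. 0), - 1 / of_nat d) y \<in> MZ \<longrightarrow>
        bij_betw (\<lambda>t. eB B (0, t, 0)) (TS \<omega>) (gen_by (TSB \<omega> B) y)
      \<and> (\<forall>t \<in> TS \<omega>. \<forall>t' \<in> TS \<omega>. mpair (eB B (0, t, 0)) (eB B (0, t', 0)) = h2pair t t')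
      \<and> (\<forall>t \<in> TS \<omega>. mcplx (eB B (0, t, 0)) = eB (cplx B) (0, cplx t, 0))
      \<and> (\<forall>k::int. msc (of_int k) y \<in> TSB \<omega> B \<longleftrightarrow> int d dvd k)
      \<and> (\<forall>t \<in> TS \<omega>. \<forall>s \<in> TSB \<omega> B. \<forall>k::int.
           eB B (0, t, 0) = madd s (msc (of_int k) y) \<longrightarrow>
           h2pair B t - of_int k / of_nat d \<in> \<int>))"
proof (intro conjI impI)
  show "(0, (\<lambda>_. 0), - 1 / of_nat d) \<in> mdual (NSt \<omega> B)"
    unfolding d by (rule NSt_dual_point[OF B])
next
  assume y_dual: "y \<in> mdual (TSB \<omega> B) \<and> madd (0, (\<lambda>_. 0), - 1 / of_nat d) y \<in> MZ"
  obtain m where m: "m \<in> TS \<omega>" and y: "y = eB B (0, m, 0)"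
    and hm: "h2pair B m - 1 / of_nat d \<in> \<int>"
    using dual_TSB_representative[OF B, where y=y and c="1 / of_nat d"] y_dual by auto
  have d_pos: "d > 0" and dI: "\<forall>t \<in> TS \<omega>. of_nat d * h2pair B t \<in> \<int>"
    using br_order_props[OF B] unfolding d by auto
  show "bij_betw (\<lambda>t. eB B (0, t, 0)) (TS \<omega>) (gen_by (TSB \<omega> B) y)"
    unfolding y by (rule eB_bij_gen_by[OF B m hm dI d_pos])
  show "\<forall>t \<in> TS \<omega>. \<forall>t' \<in> TS \<omega>. mpair (eB B (0, t, 0)) (eB B (0, t', 0)) = h2pair t t'"
    by (simp add: eB_isometry)
  show "\<forall>t \<in> TS \<omega>. mcplx (eB B (0, t, 0)) = eB (cplx B) (0, cplx t, 0)"
    by (simp add: eB_cplx)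
  show "\<forall>k::int. msc (of_int k) y \<in> TSB \<omega> B \<longleftrightarrow> int d dvd k"
    unfolding y using gen_by_order[OF B m hm d_pos] by blast
  show "\<forall>t \<in> TS \<omega>. \<forall>s \<in> TSB \<omega> B. \<forall>k::int. eB B (0, t, 0) = madd s (msc (of_int k) y) \<longrightarrow>
           h2pair B t - of_int k / of_nat d \<in> \<int>"
    unfolding y using gen_by_coefficient[OF B m hm] by blast
qed

end
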